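(* Let $G=(V,E)$ be a fixed connected simple undirected graph on $N\ge 2$ nodes, and consider the system on $G$ with update rule $x_i(k+1)=\operatorname{sign}[v_i(k)+\xi_i(k)]$ and noise level $\eta>0$. Let $D=\max_{i\in V}|N_i|$ be the maximum number of nodes in one neighborhood. (i) If $\eta\in(1-2/D,\,1]$, then for every initial condition $x(0)$, with probability one the system converges to agreement: the state eventually becomes (and thereafter remains) either the all-$(+1)$ state or the all-$(-1)$ state. (ii) If $\eta>1$, then for every initial condition, $\mathbf{E}\,S(k)\to 0$ as $k\to\infty$.
   Context: System on a graph: nodes $V=\{1,\dots,N\}$, each node $i$ carries a value $x_i(k)\in\{+1,-1\}$ at each time $k=0,1,2,\dots$. The neighborhood $N_i$ of node $i$ is the set consisting of node $i$ itself together with all nodes adjacent to $i$. Set $v_i(k)=\frac{1}{|N_i|}\sum_{j\in N_i}x_j(k)$. The update rule is $x_i(k+1)=\operatorname{sign}[v_i(k)+\xi_i(k)]$, where the noises $\xi_i(k)$ are uniformly distributed on $[-\eta,\eta]$, independent across $i$ and $k$, and independent of the initial state $x(0)$ (which may be arbitrary, possibly random). The state is $x(k)=(x_1(k),\dots,x_N(k))$ and the state sum is $S(k)=\sum_{i=1}^N x_i(k)$; the all-$(+1)$ and all-$(-1)$ states are denoted $+N$ and $-N$. The state process is a Markov chain on $\{\pm1\}^N$. *)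

theory Defs
  imports "HOL-Probability.Probability"
begin

definition simple_graph :: "'a set \<Rightarrow> ('a \<Rightarrow> 'a \<Rightarrow> bool) \<Rightarrow> bool" where
  "simple_graph V E \<longleftrightarrow> finite V \<and> (\<forall>a b. E a b \<longrightarrow> a \<in> V \<and> b \<in> V)
     \<and> (\<forall>a b. E a b \<longrightarrow> E b a) \<and> (\<forall>a. \<not> E a a)"

definition graph_connected :: "'a set \<Rightarrow> ('a \<Rightarrow> 'a \<Rightarrow> bool) \<Rightarrow> bool" where
  "graph_connected V E \<longleftrightarrow> (\<forall>a\<in>V. \<forall>b\<in>V. (\<lambda>u w. u \<in> V \<and> w \<in> V \<and> E u w)\<^sup>*\<^sup>* a b)"

definition nbhd :: "'a set \<Rightarrow> ('a \<Rightarrow> 'a \<Rightarrow> bool) \<Rightarrow> 'a \<Rightarrow> 'a set" where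
  "nbhd V E i = insert i {j \<in> V. E i j}"

definition max_nbhd :: "'a set \<Rightarrow> ('a \<Rightarrow> 'a \<Rightarrow> bool) \<Rightarrow> nat" where
  "max_nbhd V E = Max ((\<lambda>i. card (nbhd V E i)) ` V)"

definition local_avg :: "'a set \<Rightarrow> ('a \<Rightarrow> 'a \<Rightarrow> bool) \<Rightarrow> ('a \<Rightarrow> int) \<Rightarrow> 'a \<Rightarrow> real" where
  "local_avg V E x i = (\<Sum>j\<in>nbhd V E i. real_of_int (x j)) / real (card (nbhd V E i))"

text \<open>Sign function with values in {+1,-1}; the convention at 0 is immaterial
  (the argument is 0 with probability zero).\<close>
definition sign1 :: "real \<Rightarrow> int" where
  "sign1 r = (if r \<ge> 0 then 1 else -1)"

text \<open>Trajectory x(k) driven by a noise realisation \<omega>, \<omega> (i,k) = \<xi>_i(k).\<close>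
primrec traj :: "'a set \<Rightarrow> ('a \<Rightarrow> 'a \<Rightarrow> bool) \<Rightarrow> ('a \<Rightarrow> int) \<Rightarrow> ('a \<times> nat \<Rightarrow> real) \<Rightarrow> nat \<Rightarrow> 'a \<Rightarrow> int" where
  "traj V E x0 \<omega> 0 = x0"
| "traj V E x0 \<omega> (Suc k) = (\<lambda>i. sign1 (local_avg V E (traj V E x0 \<omega> k) i + \<omega> (i, k)))"

definition noise_space :: "real \<Rightarrow> ('a \<times> nat \<Rightarrow> real) measure" where
  "noise_space \<eta> = PiM UNIV (\<lambda>_. uniform_measure lborel {-\<eta>..\<eta>})"

definition state_sum :: "'a set \<Rightarrow> ('a \<Rightarrow> int) \<Rightarrow> real" where
  "state_sum V x = (\<Sum>i\<in>V. real_of_int (x i))"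

end

theory Submission
  imports Defs
begin

(* Part (ii), eta > 1.  For |a| <= 1 and xi uniform on [-eta,eta] we have
   E sign(a + xi) = a/eta.  Since the noise xi_i(k) is independent of the past, which
   determines v_i(k), this gives E x_i(k+1) = E v_i(k) / eta, hence |E x_i(k)| <= eta^-k
   and E S(k) -> 0 geometrically.

   Part (i), 1 - 2/D < eta <= 1.  Almost surely all noise values lie in [-eta,eta), and
   then the states +N and -N are absorbing.  Put c = 1 - 2/D.  A node with some (+1) in
   its neighborhood has v_i >= 2/|N_i| - 1 >= -c, so in a step where all noises exceed c
   the set of (+1)-nodes never shrinks and, the graph being connected, strictly grows
   until it is all of V.  Hence |V| consecutive such steps force +N, unless the state
   already was -N.  Disjoint time blocks carry independent noise and each block is good
   with the same positive probability, so almost surely some block is good. *)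

abbreviation unif :: "real \<Rightarrow> real measure" where
  "unif \<eta> \<equiv> uniform_measure lborel {-\<eta>..\<eta>}"

lemma prob_space_unif: "0 < \<eta> \<Longrightarrow> prob_space (unif \<eta>)"
  by (intro prob_space_uniform_measure) auto

lemma product_prob_space_unif: "0 < \<eta> \<Longrightarrow> product_prob_space (\<lambda>_. unif \<eta>)"
  by (simp add: product_prob_space_def product_prob_space_axioms_def product_sigma_finite_def
      prob_space_unif prob_space_imp_sigma_finite)

lemma prob_space_noise: "0 < \<eta> \<Longrightarrow> prob_space (noise_space \<eta>)"
  unfolding noise_space_def by (intro prob_space_PiM prob_space_unif)

lemma measurable_unif_eq_borel: "measurable N (unif \<eta>) = measurable N borel"
  by (rule measurable_cong_sets) auto

lemma coord_measurable_PiM: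
  "q \<in> I \<Longrightarrow> (\<lambda>x. x q) \<in> borel_measurable (PiM I (\<lambda>_. unif \<eta>))"
  using measurable_component_singleton[of q I "\<lambda>_. unif \<eta>"] measurable_unif_eq_borel by metis

lemma noise_coord_measurable: "(\<lambda>\<omega>. \<omega> q) \<in> borel_measurable (noise_space \<eta>)"
  unfolding noise_space_def by (rule coord_measurable_PiM) simp

lemma distr_noise_coord:
  assumes "0 < \<eta>"
  shows "distr (noise_space \<eta>) borel (\<lambda>\<omega>. \<omega> q) = unif \<eta>"
proof -
  interpret product_prob_space "\<lambda>_. unif \<eta>" UNIV using product_prob_space_unif assms .
  have "distr (noise_space \<eta>) borel (\<lambda>\<omega>. \<omega> q) = distr (noise_space \<eta>) (unif \<eta>) (\<lambda>\<omega>. \<omega> q)"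
    by (rule distr_cong) auto
  also have "\<dots> = unif \<eta>" unfolding noise_space_def by (rule PiM_component) simp
  finally show ?thesis .
qed

lemma indep_noise_coords:
  assumes "0 < \<eta>"
  shows "prob_space.indep_vars (noise_space \<eta>) (\<lambda>_. unif \<eta>) (\<lambda>q \<omega>. \<omega> q) UNIV"
proof -
  interpret product_prob_space "\<lambda>_. unif \<eta>" UNIV using product_prob_space_unif assms .
  have marginals: "(\<Pi>\<^sub>M q\<in>UNIV. distr (PiM UNIV (\<lambda>_. unif \<eta>)) (unif \<eta>) (\<lambda>\<omega>. \<omega> q))
      = PiM UNIV (\<lambda>_. unif \<eta>)"
    by (intro PiM_cong refl) (simp add: PiM_component)
  show ?thesis
    unfolding noise_space_def
    by (subst P.indep_vars_iff_distr_eq_PiM) (simp_all add: marginals restrict_def)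
qed

(* A simple zero-one law: if independent random variables X m hit sets A m, each with
   probability at least r > 0, then almost surely some X m hits its set, because missing
   the first n+1 sets has probability at most (1-r)^(n+1). *)
lemma (in prob_space) AE_ex_of_indep_vars:
  fixes X :: "nat \<Rightarrow> 'a \<Rightarrow> 'b"
  assumes indep: "indep_vars N X UNIV" and A: "\<And>m. A m \<in> sets (N m)"
    and r: "0 < r" "\<And>m. r \<le> prob (X m -` A m \<inter> space M)"
  shows "AE \<omega> in M. \<exists>m. X m \<omega> \<in> A m"
proof -
  have X[measurable]: "X m \<in> measurable M (N m)" for m
    using indep by (simp add: indep_vars_def)
  note A[measurable]
  define Z where "Z = {\<omega> \<in> space M. \<not> (\<exists>m. X m \<omega> \<in> A m)}"
  have Z_event: "Z \<in> events" unfolding Z_def by measurable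
  have "prob Z \<le> (1 - r) ^ Suc n" for n
  proof -
    let ?miss = "\<lambda>m. X m -` (space (N m) - A m) \<inter> space M"
    have miss: "prob (?miss m) = 1 - prob (X m -` A m \<inter> space M)" for m
    proof -
      have "?miss m = space M - (X m -` A m \<inter> space M)"
        using measurable_space[OF X[of m]] by auto
      then show ?thesis by (simp add: prob_compl measurable_sets[OF X A])
    qed
    have "Z \<subseteq> (\<Inter>m\<in>{..n}. ?miss m)"
      unfolding Z_def using measurable_space[OF X] by auto
    then have "prob Z \<le> prob (\<Inter>m\<in>{..n}. ?miss m)"
      by (intro finite_measure_mono) (auto intro: measurable_sets[OF X])
    also have "\<dots> = (\<Prod>m\<in>{..n}. prob (?miss m))"
      by (intro indep_varsD[OF indep]) auto
    also have "\<dots> \<le> (\<Prod>m\<in>{..n}. 1 - r)"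
      by (intro prod_mono) (auto simp: miss r(2))
    finally show ?thesis by simp
  qed
  moreover have "(\<lambda>n. (1 - r) ^ Suc n) \<longlonglongrightarrow> 0"
    using r order.trans[OF r(2) prob_le_1] by (intro LIMSEQ_power_zero LIMSEQ_Suc) auto
  ultimately have "prob Z \<le> 0" by (intro LIMSEQ_le_const) auto
  then have "prob Z = 0" using measure_nonneg[of M Z] by linarith
  then show ?thesis using prob_Collect_eq_0[OF Z_event[unfolded Z_def]] by (simp add: Z_def)
qed

lemma unif_above_pos:
  assumes "0 < \<eta>" "c < \<eta>"
  shows "0 < measure (unif \<eta>) {c<..}"
proof -
  have "{-\<eta>..\<eta>} \<inter> {c<..} = (if c < -\<eta> then {-\<eta>..\<eta>} else {c<..\<eta>})" by auto
  then have "0 < measure lborel ({-\<eta>..\<eta>} \<inter> {c<..})" using assms by simp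
  moreover have "measure (unif \<eta>) {c<..}
      = measure lborel ({-\<eta>..\<eta>} \<inter> {c<..}) / measure lborel {-\<eta>..\<eta>}"
    using assms by (intro measure_uniform_measure) auto
  ultimately show ?thesis using assms by simp
qed

lemma prob_noise_all_above:
  assumes "0 < \<eta>" "finite K" "K \<noteq> {}"
  shows "measure (noise_space \<eta>) {\<omega> \<in> space (noise_space \<eta>). \<forall>q\<in>K. c < \<omega> q}
       = measure (unif \<eta>) {c<..} ^ card K"
proof -
  interpret prob_space "noise_space \<eta>" using prob_space_noise assms(1) .
  have "{\<omega> \<in> space (noise_space \<eta>). \<forall>q\<in>K. c < \<omega> q}
      = (\<Inter>q\<in>K. (\<lambda>\<omega>. \<omega> q) -` {c<..} \<inter> space (noise_space \<eta>))"
    using assms(3) by auto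
  also have "prob \<dots> = (\<Prod>q\<in>K. prob ((\<lambda>\<omega>. \<omega> q) -` {c<..} \<inter> space (noise_space \<eta>)))"
    by (rule indep_varsD[OF indep_noise_coords[OF assms(1)]]) (use assms in auto)
  also have "\<dots> = (\<Prod>q\<in>K. measure (unif \<eta>) {c<..})"
  proof (intro prod.cong refl)
    fix q
    show "prob ((\<lambda>\<omega>. \<omega> q) -` {c<..} \<inter> space (noise_space \<eta>)) = measure (unif \<eta>) {c<..}"
      using measure_distr[OF noise_coord_measurable, of "{c<..}" \<eta> q]
      by (simp add: distr_noise_coord[OF assms(1)])
  qed
  finally show ?thesis by simp
qed

lemma AE_noise_in_range:
  assumes "0 < \<eta>" "finite V"
  shows "AE \<omega> in noise_space \<eta>. \<forall>i\<in>V. \<forall>t. -\<eta> \<le> \<omega> (i,t) \<and> \<omega> (i,t) < \<eta>"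
proof -
  interpret product_prob_space "\<lambda>_. unif \<eta>" UNIV using product_prob_space_unif assms(1) .
  have cnt: "countable (V \<times> (UNIV::nat set))"
    using assms(2) by (intro countable_SIGMA) (auto intro: countable_finite)
  have in_range: "AE y in unif \<eta>. -\<eta> \<le> y \<and> y < \<eta>"
  proof (subst AE_uniform_measure)
    show "AE y in lborel. y \<in> {-\<eta>..\<eta>} \<longrightarrow> -\<eta> \<le> y \<and> y < \<eta>"
      using AE_lborel_singleton[of \<eta>] by eventually_elim auto
  qed (use assms in auto)
  have coord: "AE \<omega> in noise_space \<eta>. -\<eta> \<le> \<omega> q \<and> \<omega> q < \<eta>" for q
    unfolding noise_space_def by (rule AE_component[OF _ in_range]) simp
  have "AE \<omega> in noise_space \<eta>. \<forall>q\<in>V \<times> UNIV. -\<eta> \<le> \<omega> q \<and> \<omega> q < \<eta>"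
    unfolding AE_ball_countable[OF cnt] using coord by blast
  then show ?thesis by eventually_elim auto
qed

lemma disjoint_time_blocks: "disjoint_family (\<lambda>m::nat. V \<times> {m*L..<m*L+L})"
proof -
  have block_index: "t div L = m" if "t \<in> {m*L..<m*L+L}" for t m
    using that by (intro div_nat_eqI) (auto simp: mult.commute)
  show ?thesis unfolding disjoint_family_on_def by (force dest: block_index)
qed

(* Almost surely there is a time window of length L in which every noise value at a node
   of V exceeds c: apply the zero-one law to the disjoint blocks V x [mL, mL+L). *)
lemma AE_noise_good_block:
  assumes "0 < \<eta>" "c < \<eta>" "finite V" "V \<noteq> {}" "0 < L"
  shows "AE \<omega> in noise_space \<eta>. \<exists>a. \<forall>i\<in>V. \<forall>t\<in>{a..<a+L}. c < \<omega> (i,t)"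
proof -
  interpret prob_space "noise_space \<eta>" using prob_space_noise assms(1) .
  define K where "K m = V \<times> {m*L..<m*L+L}" for m
  define block where "block m = PiM (K m) (\<lambda>_. unif \<eta>)" for m
  define good where "good m = {x \<in> space (block m). \<forall>q\<in>K m. c < x q}" for m
  have K_disjoint: "disjoint_family K"
    unfolding K_def by (rule disjoint_time_blocks)
  have "indep_vars block (\<lambda>m \<omega>. restrict (\<lambda>q. \<omega> q) (K m)) UNIV"
    unfolding block_def
    by (rule indep_vars_restrict[OF indep_noise_coords[OF assms(1)] _ K_disjoint]) simp
  moreover have "good m \<in> sets (block m)" for m
  proof -
    have [measurable]: "(\<lambda>x. x q) \<in> borel_measurable (block m)" if "q \<in> K m" for q
      unfolding block_def using that by (rule coord_measurable_PiM)
    show ?thesis unfolding good_def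
      by (rule sets.sets_Collect_finite_All) (auto simp: K_def assms(3))
  qed
  moreover have "prob ((\<lambda>\<omega>. restrict (\<lambda>q. \<omega> q) (K m)) -` good m \<inter> space (noise_space \<eta>))
      = measure (unif \<eta>) {c<..} ^ (card V * L)" for m
  proof -
    have "(\<lambda>\<omega>. restrict (\<lambda>q. \<omega> q) (K m)) -` good m \<inter> space (noise_space \<eta>)
        = {\<omega> \<in> space (noise_space \<eta>). \<forall>q\<in>K m. c < \<omega> q}"
      unfolding good_def block_def noise_space_def by (auto simp: space_PiM)
    moreover have "finite (K m)" "K m \<noteq> {}" "card (K m) = card V * L"
      using assms by (auto simp: K_def card_cartesian_product)
    ultimately show ?thesis using prob_noise_all_above[OF assms(1), of "K m" c] by simp
  qed
  moreover have "0 < measure (unif \<eta>) {c<..} ^ (card V * L)"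
    using unif_above_pos[OF assms(1,2)] by simp
  ultimately have "AE \<omega> in noise_space \<eta>. \<exists>m. restrict (\<lambda>q. \<omega> q) (K m) \<in> good m"
    by (intro AE_ex_of_indep_vars[where r="measure (unif \<eta>) {c<..} ^ (card V * L)"]) auto
  then show ?thesis
  proof eventually_elim
    case (elim \<omega>)
    then obtain m where "restrict (\<lambda>q. \<omega> q) (K m) \<in> good m" by blast
    then have "\<forall>i\<in>V. \<forall>t\<in>{m*L..<m*L+L}. c < \<omega> (i,t)" by (auto simp: good_def K_def)
    then show ?case by blast
  qed
qed

lemma simple_graph_finite: "simple_graph V E \<Longrightarrow> finite V"
  by (simp add: simple_graph_def)

lemma nbhd_subset: "i \<in> V \<Longrightarrow> nbhd V E i \<subseteq> V"
  by (auto simp: nbhd_def)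

lemma finite_nbhd: "finite V \<Longrightarrow> finite (nbhd V E i)"
  by (auto simp: nbhd_def)

lemma card_nbhd_pos: "finite V \<Longrightarrow> 0 < card (nbhd V E i)"
  using finite_nbhd[of V E i] by (auto simp: nbhd_def card_gt_0_iff)

lemma card_nbhd_le_max: "finite V \<Longrightarrow> i \<in> V \<Longrightarrow> card (nbhd V E i) \<le> max_nbhd V E"
  unfolding max_nbhd_def by (intro Max_ge) auto

lemma traj_pm: "\<forall>i\<in>V. x0 i \<in> {1,-1} \<Longrightarrow> i \<in> V \<Longrightarrow> traj V E x0 \<omega> k i \<in> {1,-1}"
  by (cases k) (auto simp: sign1_def)

lemma local_avg_abs_le_1:
  assumes "finite V" "i \<in> V" "\<forall>j\<in>V. y j \<in> {1,-1}"
  shows "\<bar>local_avg V E y i\<bar> \<le> 1"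
proof -
  have "\<bar>\<Sum>j\<in>nbhd V E i. real_of_int (y j)\<bar> \<le> (\<Sum>j\<in>nbhd V E i. \<bar>real_of_int (y j)\<bar>)"
    by (rule sum_abs)
  also have "\<dots> = (\<Sum>j\<in>nbhd V E i. 1)"
    using assms(3) nbhd_subset[OF assms(2), of E] by (intro sum.cong) (auto dest!: subsetD)
  finally show ?thesis
    using card_nbhd_pos[OF assms(1), of E i] by (simp add: local_avg_def abs_divide)
qed

lemma local_avg_const:
  assumes "finite V" "i \<in> V" "\<forall>j\<in>V. y j = s"
  shows "local_avg V E y i = real_of_int s"
proof -
  have "(\<Sum>j\<in>nbhd V E i. real_of_int (y j)) = (\<Sum>j\<in>nbhd V E i. real_of_int s)"
    using assms nbhd_subset[OF assms(2)] by (intro sum.cong) auto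
  then show ?thesis using card_nbhd_pos[OF assms(1), of E i] by (simp add: local_avg_def)
qed

lemma local_avg_lower_bound:
  assumes "finite V" "i \<in> V" "\<forall>j\<in>V. y j \<in> {1,-1}" "p \<in> nbhd V E i" "y p = 1"
  shows "2 / real (max_nbhd V E) - 1 \<le> local_avg V E y i"
proof -
  define N where "N = nbhd V E i"
  have N: "finite N" "p \<in> N" "N \<subseteq> V" "0 < card N" "card N \<le> max_nbhd V E"
    unfolding N_def using assms(4) finite_nbhd[OF assms(1)] nbhd_subset[OF assms(2)]
      card_nbhd_pos[OF assms(1)] card_nbhd_le_max[OF assms(1,2)] by simp_all
  have "(\<Sum>j\<in>N. real_of_int (y j)) = 1 + (\<Sum>j\<in>N-{p}. real_of_int (y j))"
    using N(1,2) assms(5) by (simp add: sum.remove)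
  moreover have "(\<Sum>j\<in>N-{p}. (-1::real)) \<le> (\<Sum>j\<in>N-{p}. real_of_int (y j))"
    using assms(3) N(3) by (intro sum_mono) (force simp: subset_iff)
  moreover have "(\<Sum>j\<in>N-{p}. (-1::real)) = 1 - real (card N)"
    using N(1,2,4) by (simp add: of_nat_diff)
  ultimately have "2 - real (card N) \<le> (\<Sum>j\<in>N. real_of_int (y j))" by linarith
  then have "(2 - real (card N)) / real (card N) \<le> local_avg V E y i"
    unfolding local_avg_def N_def[symmetric] using N(4) by (intro divide_right_mono) auto
  moreover have "(2 - real (card N)) / real (card N) = 2 / real (card N) - 1"
    using N(4) by (simp add: field_simps)
  moreover have "2 / real (max_nbhd V E) \<le> 2 / real (card N)"
    using N(4,5) by (intro divide_left_mono) auto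
  ultimately show ?thesis by linarith
qed

lemma sign1_stable:
  assumes "s \<in> {1,-1}" "-\<eta> \<le> \<xi>" "\<xi> < \<eta>" "\<eta> \<le> 1"
  shows "sign1 (real_of_int s + \<xi>) = s"
  using assms by (auto simp: sign1_def)

lemma consensus_absorbing:
  assumes "finite V" "\<eta> \<le> 1" "\<forall>i\<in>V. \<forall>t. -\<eta> \<le> \<omega> (i,t) \<and> \<omega> (i,t) < \<eta>" "s \<in> {1,-1}"
    and start: "\<forall>i\<in>V. traj V E x0 \<omega> k i = s"
  shows "k \<le> k' \<Longrightarrow> \<forall>i\<in>V. traj V E x0 \<omega> k' i = s"
proof (induction k' rule: dec_induct)
  case base then show ?case using start .
next
  case (step t)
  show ?case
  proof
    fix i assume i: "i \<in> V"
    then have "local_avg V E (traj V E x0 \<omega> t) i = real_of_int s"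
      using local_avg_const[OF assms(1)] step.IH by blast
    moreover have "-\<eta> \<le> \<omega> (i,t)" "\<omega> (i,t) < \<eta>" using assms(3) i by auto
    ultimately show "traj V E x0 \<omega> (Suc t) i = s"
      using sign1_stable[OF assms(4) _ _ assms(2)] by simp
  qed
qed

lemma plus_propagates:
  assumes "finite V" "i \<in> V" "\<forall>j\<in>V. y j \<in> {1,-1}" "p \<in> nbhd V E i" "y p = 1"
    and "1 - 2 / real (max_nbhd V E) < \<xi>"
  shows "sign1 (local_avg V E y i + \<xi>) = 1"
  using local_avg_lower_bound[OF assms(1-5)] assms(6) by (simp add: sign1_def)

lemma connected_closed_subset:
  assumes "graph_connected V E" "S \<subseteq> V" "p \<in> S"
    and closed: "\<forall>i\<in>S. \<forall>j\<in>V. E i j \<longrightarrow> j \<in> S"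
  shows "S = V"
proof (rule antisym[OF assms(2)], rule subsetI)
  fix b assume "b \<in> V"
  then have "(\<lambda>u w. u \<in> V \<and> w \<in> V \<and> E u w)\<^sup>*\<^sup>* p b"
    using assms(1-3) by (auto simp: graph_connected_def)
  then show "b \<in> S"
    by (induction rule: rtranclp_induct) (use assms(3) closed in auto)
qed

definition plus_nodes :: "'a set \<Rightarrow> ('a \<Rightarrow> int) \<Rightarrow> 'a set" where
  "plus_nodes V y = {i \<in> V. y i = 1}"

(* One step with all noises above 1 - 2/D: the (+1)-nodes are kept, and if they are not
   yet all of V, some neighbor outside joins them (connectedness). *)
lemma plus_nodes_grow:
  assumes sg: "simple_graph V E" and conn: "graph_connected V E"
    and y: "\<forall>j\<in>V. y j \<in> {1,-1}" and nonempty: "plus_nodes V y \<noteq> {}"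
    and \<xi>: "\<forall>i\<in>V. 1 - 2 / real (max_nbhd V E) < \<xi> i"
  shows "min (card V) (Suc (card (plus_nodes V y)))
         \<le> card (plus_nodes V (\<lambda>i. sign1 (local_avg V E y i + \<xi> i)))"
proof -
  let ?P = "plus_nodes V y" and ?P' = "plus_nodes V (\<lambda>i. sign1 (local_avg V E y i + \<xi> i))"
  have fin: "finite V" using simple_graph_finite[OF sg] .
  have reach: "i \<in> ?P'" if "i \<in> V" "p \<in> nbhd V E i" "p \<in> ?P" for i p
    using plus_propagates[OF fin that(1) y that(2)] \<xi> that by (auto simp: plus_nodes_def)
  have mono: "?P \<subseteq> ?P'"
  proof
    fix i assume i: "i \<in> ?P"
    then have "i \<in> V" "i \<in> nbhd V E i" by (auto simp: plus_nodes_def nbhd_def)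
    then show "i \<in> ?P'" using reach i by blast
  qed
  have P'V: "?P' \<subseteq> V" by (auto simp: plus_nodes_def)
  show ?thesis
  proof (cases "?P = V")
    case True
    then have "?P' = V" using mono P'V by blast
    then show ?thesis by simp
  next
    case False
    obtain p where "p \<in> ?P" using nonempty by blast
    moreover have "?P \<subseteq> V" by (auto simp: plus_nodes_def)
    ultimately have "\<not> (\<forall>i\<in>?P. \<forall>j\<in>V. E i j \<longrightarrow> j \<in> ?P)"
      using connected_closed_subset[OF conn] False by blast
    then obtain i j where ij: "i \<in> ?P" "j \<in> V" "E i j" "j \<notin> ?P" by blast
    then have "i \<in> nbhd V E j"
      using sg by (auto simp: nbhd_def plus_nodes_def simple_graph_def)
    then have "insert j ?P \<subseteq> ?P'" using reach ij(1,2) mono by blast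
    then have "card (insert j ?P) \<le> card ?P'"
      using fin P'V by (intro card_mono) (auto intro: finite_subset)
    moreover have "finite ?P" using fin by (simp add: plus_nodes_def)
    ultimately show ?thesis
      using card_insert_disjoint[of ?P j] ij(4) by (simp add: min_le_iff_disj)
  qed
qed

lemma plus_nodes_fill:
  assumes sg: "simple_graph V E" and conn: "graph_connected V E"
    and x0: "\<forall>i\<in>V. x0 i \<in> {1,-1}"
    and start: "plus_nodes V (traj V E x0 \<omega> a) \<noteq> {}"
  shows "\<forall>i\<in>V. \<forall>t\<in>{a..<a+s}. 1 - 2 / real (max_nbhd V E) < \<omega> (i,t) \<Longrightarrow>
         min (card V) (Suc s) \<le> card (plus_nodes V (traj V E x0 \<omega> (a+s)))"
proof (induction s)
  case 0
  have "finite (plus_nodes V (traj V E x0 \<omega> a))"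
    using simple_graph_finite[OF sg] by (simp add: plus_nodes_def)
  then have "0 < card (plus_nodes V (traj V E x0 \<omega> a))" using start by (simp add: card_gt_0_iff)
  then show ?case by (simp add: min_le_iff_disj)
next
  case (Suc s)
  let ?y = "traj V E x0 \<omega> (a+s)"
  have IH: "min (card V) (Suc s) \<le> card (plus_nodes V ?y)" using Suc by auto
  have "0 < card V" using start simple_graph_finite[OF sg] by (auto simp: plus_nodes_def card_gt_0_iff)
  then have "plus_nodes V ?y \<noteq> {}" using IH by auto
  then have "min (card V) (Suc (card (plus_nodes V ?y)))
      \<le> card (plus_nodes V (\<lambda>i. sign1 (local_avg V E ?y i + \<omega> (i, a+s))))"
    using Suc.prems traj_pm[OF x0] by (intro plus_nodes_grow[OF sg conn]) auto
  then show ?case using IH by simp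
qed

lemma deterministic_consensus:
  assumes sg: "simple_graph V E" and conn: "graph_connected V E"
    and x0: "\<forall>i\<in>V. x0 i \<in> {1,-1}" and \<eta>: "\<eta> \<le> 1"
    and range: "\<forall>i\<in>V. \<forall>t. -\<eta> \<le> \<omega> (i,t) \<and> \<omega> (i,t) < \<eta>"
    and good: "\<forall>i\<in>V. \<forall>t\<in>{a..<a + card V}. 1 - 2 / real (max_nbhd V E) < \<omega> (i,t)"
  shows "\<exists>K. (\<forall>k\<ge>K. \<forall>i\<in>V. traj V E x0 \<omega> k i = 1) \<or> (\<forall>k\<ge>K. \<forall>i\<in>V. traj V E x0 \<omega> k i = -1)"
proof (cases "plus_nodes V (traj V E x0 \<omega> a) = {}")
  case True
  then have "\<forall>i\<in>V. traj V E x0 \<omega> a i = -1"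
    using traj_pm[OF x0] by (fastforce simp: plus_nodes_def)
  then show ?thesis using consensus_absorbing[OF simple_graph_finite[OF sg] \<eta> range, of "-1"] by blast
next
  case False
  have fin: "finite V" using simple_graph_finite[OF sg] .
  let ?P = "plus_nodes V (traj V E x0 \<omega> (a + card V))"
  have "card V \<le> card ?P" using plus_nodes_fill[OF sg conn x0 False good] by simp
  moreover have "?P \<subseteq> V" by (auto simp: plus_nodes_def)
  ultimately have "?P = V" using fin by (intro card_subset_eq) (auto dest: card_mono[OF fin])
  then have "\<forall>i\<in>V. traj V E x0 \<omega> (a + card V) i = 1" by (auto simp: plus_nodes_def)
  then show ?thesis using consensus_absorbing[OF fin \<eta> range, of 1] by blast
qed

lemma traj_depends_on_past:
  "(\<And>p. snd p < k \<Longrightarrow> \<omega> p = \<omega>' p) \<Longrightarrow> traj V E x0 \<omega> k = traj V E x0 \<omega>' k"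
proof (induction k)
  case (Suc k)
  then have "traj V E x0 \<omega> k = traj V E x0 \<omega>' k" by simp
  moreover have "\<omega> (i,k) = \<omega>' (i,k)" for i using Suc.prems by simp
  ultimately show ?case by simp
qed simp

lemma real_sign1: "real_of_int (sign1 r) = (if 0 \<le> r then 1 else -1)"
  by (simp add: sign1_def)

lemma traj_measurable:
  "(\<And>p. snd p < k \<Longrightarrow> p \<in> I) \<Longrightarrow>
   (\<lambda>\<omega>. real_of_int (traj V E x0 \<omega> k i)) \<in> borel_measurable (PiM I (\<lambda>_. unif \<eta>))"
proof (induction k arbitrary: i)
  case (Suc k)
  have [measurable]: "(\<lambda>\<omega>. real_of_int (traj V E x0 \<omega> k j)) \<in> borel_measurable (PiM I (\<lambda>_. unif \<eta>))" for j
    using Suc by auto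
  have [measurable]: "(\<lambda>\<omega>. \<omega> (i,k)) \<in> borel_measurable (PiM I (\<lambda>_. unif \<eta>))"
    using Suc.prems by (intro coord_measurable_PiM) auto
  show ?case unfolding traj.simps real_sign1 local_avg_def by measurable
qed simp

lemma integral_sign_unif:
  assumes "1 < \<eta>" "\<bar>a\<bar> \<le> 1"
  shows "(\<integral>y. real_of_int (sign1 (a + y)) \<partial>unif \<eta>) = a / \<eta>"
proof -
  interpret prob_space "unif \<eta>" using assms by (intro prob_space_unif) auto
  have "(\<lambda>y. real_of_int (sign1 (a + y))) = (\<lambda>y. 2 * indicator {-a..} y - 1)"
    by (auto simp: sign1_def fun_eq_iff split: split_indicator)
  moreover have "integrable (unif \<eta>) (\<lambda>y. indicator {-a..} y :: real)"
    using emeasure_le_1[of "{-a..}"]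
    by (intro integrable_real_indicator)
      (auto simp del: emeasure_uniform_measure intro: order.strict_trans1)
  moreover have "measure (unif \<eta>) {-a..} = (\<eta> + a) / (2 * \<eta>)"
  proof -
    have "{-\<eta>..\<eta>} \<inter> {-a..} = {-a..\<eta>}" using assms by auto
    then show ?thesis using assms by (subst measure_uniform_measure) auto
  qed
  ultimately show ?thesis using assms prob_space by (simp add: field_simps)
qed

(* The same identity with a random, bounded a independent of xi: E sign(X + Y) = E X / eta,
   by Fubini on the product of the two laws. *)
lemma (in prob_space) expectation_sign_indep_unif:
  assumes \<eta>: "1 < \<eta>" and indep: "indep_var borel X borel Y"
    and Y: "distr M borel Y = unif \<eta>" and X: "\<And>\<omega>. \<omega> \<in> space M \<Longrightarrow> \<bar>X \<omega>\<bar> \<le> 1"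
  shows "expectation (\<lambda>\<omega>. real_of_int (sign1 (X \<omega> + Y \<omega>))) = expectation X / \<eta>"
proof -
  have [measurable]: "X \<in> borel_measurable M" "Y \<in> borel_measurable M"
    and joint: "distr M borel X \<Otimes>\<^sub>M distr M borel Y = distr M (borel \<Otimes>\<^sub>M borel) (\<lambda>\<omega>. (X \<omega>, Y \<omega>))"
    using indep unfolding indep_var_distribution_eq by auto
  define PX where "PX = distr M borel X"
  interpret PX: prob_space PX unfolding PX_def by (rule prob_space_distr) simp
  interpret U: prob_space "unif \<eta>" using \<eta> by (intro prob_space_unif) auto
  interpret PXU: pair_prob_space PX "unif \<eta>" ..
  define h where "h p = real_of_int (sign1 (fst p + snd p))" for p :: "real \<times> real"
  have h_borel[measurable]: "h \<in> borel_measurable (borel \<Otimes>\<^sub>M borel)"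
    unfolding h_def real_sign1 by measurable
  then have h_meas: "h \<in> borel_measurable (PX \<Otimes>\<^sub>M unif \<eta>)"
    by (simp add: PX_def cong: measurable_cong_sets)
  have "expectation (\<lambda>\<omega>. real_of_int (sign1 (X \<omega> + Y \<omega>))) = integral\<^sup>L (PX \<Otimes>\<^sub>M unif \<eta>) h"
    using integral_distr[of "\<lambda>\<omega>. (X \<omega>, Y \<omega>)" M "borel \<Otimes>\<^sub>M borel" h]
    by (simp add: joint[symmetric] Y PX_def h_def)
  also have "\<dots> = (\<integral>x. (\<integral>y. h (x, y) \<partial>unif \<eta>) \<partial>PX)"
    using h_meas by (intro PXU.integral_fst'[symmetric] PXU.integrable_const_bound[where B=1])
      (auto simp: h_def sign1_def)
  also have "\<dots> = (\<integral>x. x / \<eta> \<partial>PX)"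
  proof (rule integral_cong_AE)
    have "AE x in PX. \<bar>x\<bar> \<le> 1"
      unfolding PX_def using X by (subst AE_distr_iff) auto
    then show "AE x in PX. (\<integral>y. h (x, y) \<partial>unif \<eta>) = x / \<eta>"
      by eventually_elim (simp add: h_def integral_sign_unif[OF \<eta>])
  qed (use h_meas in \<open>auto simp: PX_def\<close>)
  also have "\<dots> = expectation X / \<eta>"
    unfolding PX_def by (subst integral_distr) auto
  finally show ?thesis .
qed

lemma indep_past_coord:
  assumes "0 < \<eta>" "F \<in> borel_measurable (PiM I (\<lambda>_. unif \<eta>))" "q \<notin> I"
  shows "prob_space.indep_var (noise_space \<eta>) borel (\<lambda>\<omega>. F (restrict \<omega> I)) borel (\<lambda>\<omega>. \<omega> q)"
proof -
  interpret prob_space "noise_space \<eta>" using prob_space_noise assms(1) .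
  have "indep_var (PiM I (\<lambda>_. unif \<eta>)) (\<lambda>\<omega>. restrict (\<lambda>p. \<omega> p) I)
                  (PiM {q} (\<lambda>_. unif \<eta>)) (\<lambda>\<omega>. restrict (\<lambda>p. \<omega> p) {q})"
    using assms(3) by (intro indep_var_restrict[OF indep_noise_coords[OF assms(1)]]) auto
  from indep_var_compose[OF this assms(2) coord_measurable_PiM[of q "{q}" \<eta>]]
  show ?thesis by (simp add: o_def)
qed

lemma integrable_traj:
  assumes "0 < \<eta>" "\<forall>i\<in>V. x0 i \<in> {1,-1}" "i \<in> V"
  shows "integrable (noise_space \<eta>) (\<lambda>\<omega>. real_of_int (traj V E x0 \<omega> k i))"
proof -
  interpret prob_space "noise_space \<eta>" using prob_space_noise assms(1) .
  show ?thesis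
  proof (rule integrable_const_bound[where B=1])
    show "AE \<omega> in noise_space \<eta>. norm (real_of_int (traj V E x0 \<omega> k i)) \<le> 1"
    proof (rule AE_I2)
      fix \<omega> show "norm (real_of_int (traj V E x0 \<omega> k i)) \<le> 1"
        using traj_pm[OF assms(2,3), of E \<omega> k] by auto
    qed
    show "(\<lambda>\<omega>. real_of_int (traj V E x0 \<omega> k i)) \<in> borel_measurable (noise_space \<eta>)"
      unfolding noise_space_def by (rule traj_measurable) simp
  qed
qed

(* The mean recursion E x_i(k+1) = E v_i(k) / eta: the noise xi_i(k) is independent of
   v_i(k), which depends on earlier noise only. *)
lemma mean_traj_step:
  assumes \<eta>: "1 < \<eta>" and fin: "finite V" and x0: "\<forall>i\<in>V. x0 i \<in> {1,-1}" and i: "i \<in> V"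
  shows "(\<integral>\<omega>. real_of_int (traj V E x0 \<omega> (Suc k) i) \<partial>noise_space \<eta>)
       = (\<Sum>j\<in>nbhd V E i. \<integral>\<omega>. real_of_int (traj V E x0 \<omega> k j) \<partial>noise_space \<eta>)
           / real (card (nbhd V E i)) / \<eta>"
proof -
  interpret prob_space "noise_space \<eta> :: ('a \<times> nat \<Rightarrow> real) measure"
    using \<eta> by (intro prob_space_noise) simp
  define I where "I = {p :: 'a \<times> nat. snd p < k}"
  define F where "F \<omega> = local_avg V E (traj V E x0 \<omega> k) i" for \<omega>
  have past: "F (restrict \<omega> I) = F \<omega>" for \<omega>
    unfolding F_def by (subst traj_depends_on_past[of k _ \<omega>]) (auto simp: I_def)
  have F_meas: "F \<in> borel_measurable (PiM I (\<lambda>_. unif \<eta>))"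
    unfolding F_def local_avg_def
    by (intro borel_measurable_divide borel_measurable_sum traj_measurable borel_measurable_const)
      (auto simp: I_def)
  have "indep_var borel (\<lambda>\<omega>. F (restrict \<omega> I)) borel (\<lambda>\<omega>. \<omega> (i,k))"
    using \<eta> F_meas by (intro indep_past_coord) (auto simp: I_def)
  then have "expectation (\<lambda>\<omega>. real_of_int (sign1 (F (restrict \<omega> I) + \<omega> (i,k))))
      = expectation (\<lambda>\<omega>. F (restrict \<omega> I)) / \<eta>"
    using \<eta> distr_noise_coord[of \<eta> "(i,k)"] local_avg_abs_le_1[OF fin i] traj_pm[OF x0]
    by (intro expectation_sign_indep_unif) (auto simp: F_def)
  then have mean_sign: "expectation (\<lambda>\<omega>. real_of_int (sign1 (F \<omega> + \<omega> (i,k)))) = expectation F / \<eta>"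
    unfolding past .
  have "integrable (noise_space \<eta>) (\<lambda>\<omega>. real_of_int (traj V E x0 \<omega> k j))"
    if "j \<in> nbhd V E i" for j
    using nbhd_subset[OF i, of E] that \<eta> by (intro integrable_traj[OF _ x0]) auto
  then have mean_F: "expectation F
      = (\<Sum>j\<in>nbhd V E i. expectation (\<lambda>\<omega>. real_of_int (traj V E x0 \<omega> k j))) / real (card (nbhd V E i))"
    unfolding F_def local_avg_def by (simp add: Bochner_Integration.integral_sum)
  have "expectation (\<lambda>\<omega>. real_of_int (traj V E x0 \<omega> (Suc k) i))
      = expectation (\<lambda>\<omega>. real_of_int (sign1 (F \<omega> + \<omega> (i,k))))"
    by (simp add: F_def)
  also have "\<dots> = expectation F / \<eta>" by (rule mean_sign)
  finally show ?thesis by (simp add: mean_F)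
qed

lemma mean_traj_bound:
  assumes \<eta>: "1 < \<eta>" and fin: "finite V" and x0: "\<forall>i\<in>V. x0 i \<in> {1,-1}"
  shows "i \<in> V \<Longrightarrow> \<bar>\<integral>\<omega>. real_of_int (traj V E x0 \<omega> k i) \<partial>noise_space \<eta>\<bar> \<le> (1/\<eta>) ^ k"
proof (induction k arbitrary: i)
  case 0
  interpret prob_space "noise_space \<eta> :: ('a \<times> nat \<Rightarrow> real) measure"
    using \<eta> by (intro prob_space_noise) simp
  show ?case using x0 0 by auto
next
  case (Suc k)
  let ?N = "nbhd V E i" and ?m = "\<lambda>j. \<integral>\<omega>. real_of_int (traj V E x0 \<omega> k j) \<partial>noise_space \<eta>"
  have "\<bar>\<Sum>j\<in>?N. ?m j\<bar> \<le> (\<Sum>j\<in>?N. (1/\<eta>) ^ k)"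
    using Suc nbhd_subset[OF Suc.prems, of E] by (intro order.trans[OF sum_abs] sum_mono) auto
  then have "\<bar>(\<Sum>j\<in>?N. ?m j) / real (card ?N)\<bar> \<le> (1/\<eta>) ^ k"
    using card_nbhd_pos[OF fin, of E i] by (simp add: abs_divide divide_le_eq mult.commute)
  then have "\<bar>(\<Sum>j\<in>?N. ?m j) / real (card ?N)\<bar> / \<eta> \<le> (1/\<eta>) ^ k / \<eta>"
    using \<eta> by (intro divide_right_mono) auto
  moreover have "\<bar>\<integral>\<omega>. real_of_int (traj V E x0 \<omega> (Suc k) i) \<partial>noise_space \<eta>\<bar>
      = \<bar>(\<Sum>j\<in>?N. ?m j) / real (card ?N)\<bar> / \<eta>"
    using mean_traj_step[OF \<eta> fin x0 Suc.prems] \<eta> by (simp add: abs_divide)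
  ultimately show ?case by (simp add: field_simps)
qed

lemma mean_state_sum_tendsto_zero:
  assumes \<eta>: "1 < \<eta>" and fin: "finite V" and x0: "\<forall>i\<in>V. x0 i \<in> {1,-1}"
  shows "(\<lambda>k. \<integral>\<omega>. state_sum V (traj V E x0 \<omega> k) \<partial>noise_space \<eta>) \<longlonglongrightarrow> 0"
proof (rule Lim_null_comparison)
  show "\<forall>\<^sub>F k in sequentially.
          norm (\<integral>\<omega>. state_sum V (traj V E x0 \<omega> k) \<partial>noise_space \<eta>) \<le> real (card V) * (1/\<eta>) ^ k"
  proof (rule always_eventually, rule allI)
    fix k
    have "(\<integral>\<omega>. state_sum V (traj V E x0 \<omega> k) \<partial>noise_space \<eta>)
        = (\<Sum>i\<in>V. \<integral>\<omega>. real_of_int (traj V E x0 \<omega> k i) \<partial>noise_space \<eta>)"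
      unfolding state_sum_def
      using \<eta> by (intro Bochner_Integration.integral_sum integrable_traj[OF _ x0]) auto
    also have "\<bar>\<dots>\<bar> \<le> (\<Sum>i\<in>V. (1/\<eta>) ^ k)"
      using mean_traj_bound[OF \<eta> fin x0] by (intro order.trans[OF sum_abs] sum_mono) auto
    finally show "norm (\<integral>\<omega>. state_sum V (traj V E x0 \<omega> k) \<partial>noise_space \<eta>) \<le> real (card V) * (1/\<eta>) ^ k"
      by simp
  qed
  show "(\<lambda>k. real (card V) * (1/\<eta>) ^ k) \<longlonglongrightarrow> 0"
    using \<eta> by (intro tendsto_mult_right_zero LIMSEQ_power_zero) auto
qed

theorem proposition1:
  fixes V :: "'a set" and E :: "'a \<Rightarrow> 'a \<Rightarrow> bool" and \<eta> :: real
  assumes "simple_graph V E" and "graph_connected V E" and "card V \<ge> 2"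
    and "\<eta> > 0"
  shows "(1 - 2 / real (max_nbhd V E) < \<eta> \<and> \<eta> \<le> 1 \<longrightarrow>
           (\<forall>x0. (\<forall>i\<in>V. x0 i \<in> {1, -1}) \<longrightarrow>
             (AE \<omega> in noise_space \<eta>. \<exists>K. (\<forall>k\<ge>K. \<forall>i\<in>V. traj V E x0 \<omega> k i = 1)
                                       \<or> (\<forall>k\<ge>K. \<forall>i\<in>V. traj V E x0 \<omega> k i = -1))))
       \<and> (\<eta> > 1 \<longrightarrow>
           (\<forall>x0. (\<forall>i\<in>V. x0 i \<in> {1, -1}) \<longrightarrow>
             (\<lambda>k. \<integral>\<omega>. state_sum V (traj V E x0 \<omega> k) \<partial>noise_space \<eta>) \<longlonglongrightarrow> 0))"
proof (intro conjI impI allI)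
  fix x0 :: "'a \<Rightarrow> int"
  assume \<eta>: "1 - 2 / real (max_nbhd V E) < \<eta> \<and> \<eta> \<le> 1" and x0: "\<forall>i\<in>V. x0 i \<in> {1, -1}"
  have fin: "finite V" using simple_graph_finite[OF assms(1)] .
  have "AE \<omega> in noise_space \<eta>. \<forall>i\<in>V. \<forall>t. -\<eta> \<le> \<omega> (i,t) \<and> \<omega> (i,t) < \<eta>"
    by (rule AE_noise_in_range[OF assms(4) fin])
  moreover have "AE \<omega> in noise_space \<eta>. \<exists>a. \<forall>i\<in>V. \<forall>t\<in>{a..<a + card V}.
                   1 - 2 / real (max_nbhd V E) < \<omega> (i,t)"
    using \<eta> assms(3,4) fin by (intro AE_noise_good_block) auto
  ultimately show "AE \<omega> in noise_space \<eta>. \<exists>K. (\<forall>k\<ge>K. \<forall>i\<in>V. traj V E x0 \<omega> k i = 1)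
                                       \<or> (\<forall>k\<ge>K. \<forall>i\<in>V. traj V E x0 \<omega> k i = -1)"
    by eventually_elim (use deterministic_consensus[OF assms(1,2) x0] \<eta> in blast)
next
  fix x0 :: "'a \<Rightarrow> int"
  assume "1 < \<eta>" and "\<forall>i\<in>V. x0 i \<in> {1, -1}"
  then show "(\<lambda>k. \<integral>\<omega>. state_sum V (traj V E x0 \<omega> k) \<partial>noise_space \<eta>) \<longlonglongrightarrow> 0"
    using mean_state_sum_tendsto_zero simple_graph_finite[OF assms(1)] by blast
qed

end
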